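(* Let $G$ be a $2K_2$-free graph, let $a,b$ be adjacent vertices of $G$, and let $X$ be a minimal dominating set of $G$ with $a,b\in X$ and $|X|>\alpha(G)$. Let $N$ be the set of vertices not in $\{a,b\}$ adjacent to at least one of $a,b$ and let $Y=X\cap N$. Then $|Y|=1$ and the unique vertex of $Y$ is adjacent to both $a$ and $b$.
   Context: All graphs are finite, simple and undirected. $2K_2$-free means no induced subgraph isomorphic to the disjoint union of two edges. $\alpha(G)$ is the maximum size of an independent set of $G$. A dominating set is a vertex set $D$ such that every vertex outside $D$ has a neighbour in $D$; it is minimal if no proper subset is dominating. *)

theory Defs
  imports Main
begin

definition graph :: "'a set \<Rightarrow> ('a \<Rightarrow> 'a \<Rightarrow> bool) \<Rightarrow> bool" where
  "graph V E \<longleftrightarrow> finite V \<and> (\<forall>x y. E x y \<longrightarrow> x \<in> V \<and> y \<in> V)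
     \<and> (\<forall>x y. E x y \<longrightarrow> E y x) \<and> (\<forall>x. \<not> E x x)"

definition twoK2_free :: "'a set \<Rightarrow> ('a \<Rightarrow> 'a \<Rightarrow> bool) \<Rightarrow> bool" where
  "twoK2_free V E \<longleftrightarrow> \<not> (\<exists>a\<in>V. \<exists>b\<in>V. \<exists>c\<in>V. \<exists>d\<in>V.
      distinct [a, b, c, d] \<and> E a b \<and> E c d \<and>
      \<not> E a c \<and> \<not> E a d \<and> \<not> E b c \<and> \<not> E b d)"

definition independent_set :: "'a set \<Rightarrow> ('a \<Rightarrow> 'a \<Rightarrow> bool) \<Rightarrow> 'a set \<Rightarrow> bool" where
  "independent_set V E S \<longleftrightarrow> S \<subseteq> V \<and> (\<forall>x\<in>S. \<forall>y\<in>S. \<not> E x y)"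

definition independence_number :: "'a set \<Rightarrow> ('a \<Rightarrow> 'a \<Rightarrow> bool) \<Rightarrow> nat" where
  "independence_number V E = Max (card ` {S. independent_set V E S})"

definition dominating_set :: "'a set \<Rightarrow> ('a \<Rightarrow> 'a \<Rightarrow> bool) \<Rightarrow> 'a set \<Rightarrow> bool" where
  "dominating_set V E D \<longleftrightarrow> D \<subseteq> V \<and> (\<forall>v\<in>V - D. \<exists>u\<in>D. E v u)"

definition minimal_dominating_set :: "'a set \<Rightarrow> ('a \<Rightarrow> 'a \<Rightarrow> bool) \<Rightarrow> 'a set \<Rightarrow> bool" where
  "minimal_dominating_set V E D \<longleftrightarrow> dominating_set V E D \<and>
     (\<forall>D'. D' \<subset> D \<longrightarrow> \<not> dominating_set V E D')"

end

theory Submission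
  imports Defs
begin

text \<open>Every vertex of X with a neighbour in X has a private neighbour outside X, and in a 2K2-free
  graph the vertices anticomplete to an edge are pairwise non-adjacent. So exchanging some vertices
  of X for their private neighbours can never yield an independent set, since it would have
  size |X| > \<alpha>(G). Exchanging b and Y = X \<inter> N shows that the private neighbour of b sees the
  private neighbour of some vertex of Y (and symmetrically for a); two distinct vertices in Y
  then produce an induced 2K2. Finally, if Y = {y} and y were not adjacent to a, exchanging b
  alone would give an independent set.\<close>

lemma graph_sym: "graph V E \<Longrightarrow> E u v \<Longrightarrow> E v u"
  by (simp add: graph_def)

lemma graph_irrefl: "graph V E \<Longrightarrow> \<not> E u u"
  by (simp add: graph_def)

lemma graph_edge_vertices: "graph V E \<Longrightarrow> E u v \<Longrightarrow> u \<in> V \<and> v \<in> V"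
  by (simp add: graph_def)

lemma twoK2_free_edges_joined:
  assumes "graph V E" "twoK2_free V E" "E u v" "E p q" "u \<notin> {p, q}" "v \<notin> {p, q}"
  shows "E u p \<or> E u q \<or> E v p \<or> E v q"
proof -
  have "distinct [u, v, p, q]"
    using assms(3-6) graph_irrefl[OF assms(1)] by auto
  then show ?thesis
    using assms(2-4) graph_edge_vertices[OF assms(1)] unfolding twoK2_free_def by blast
qed

definition edge_neighbourhood :: "'a set \<Rightarrow> ('a \<Rightarrow> 'a \<Rightarrow> bool) \<Rightarrow> 'a \<Rightarrow> 'a \<Rightarrow> 'a set" where
  "edge_neighbourhood V E u v = {w \<in> V - {u, v}. E w u \<or> E w v}"

definition edge_non_neighbourhood :: "'a set \<Rightarrow> ('a \<Rightarrow> 'a \<Rightarrow> bool) \<Rightarrow> 'a \<Rightarrow> 'a \<Rightarrow> 'a set" where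
  "edge_non_neighbourhood V E u v = {w \<in> V - {u, v}. \<not> E w u \<and> \<not> E w v}"

lemma edge_neighbourhood_commute: "edge_neighbourhood V E u v = edge_neighbourhood V E v u"
  by (auto simp: edge_neighbourhood_def)

lemma edge_non_neighbourhood_independent:
  assumes "graph V E" "twoK2_free V E" "E u v"
  shows "independent_set V E (edge_non_neighbourhood V E u v)"
  unfolding independent_set_def
proof (intro conjI ballI notI)
  show "edge_non_neighbourhood V E u v \<subseteq> V"
    by (auto simp: edge_non_neighbourhood_def)
next
  fix p q
  assume "p \<in> edge_non_neighbourhood V E u v" "q \<in> edge_non_neighbourhood V E u v" "E p q"
  then show False
    using twoK2_free_edges_joined[OF assms] graph_sym[OF assms(1)]
    unfolding edge_non_neighbourhood_def by blast
qed

lemma independent_set_subset: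
  "independent_set V E T \<Longrightarrow> S \<subseteq> T \<Longrightarrow> independent_set V E S"
  by (auto simp: independent_set_def)

lemma independent_set_insert:
  assumes "graph V E" "independent_set V E S" "v \<in> V" "\<forall>u\<in>S. \<not> E v u"
  shows "independent_set V E (insert v S)"
  using assms graph_sym[OF assms(1)] graph_irrefl[OF assms(1)]
  unfolding independent_set_def by blast

lemma card_le_independence_number:
  assumes "graph V E" "independent_set V E S"
  shows "card S \<le> independence_number V E"
proof -
  have "{S. independent_set V E S} \<subseteq> Pow V"
    by (auto simp: independent_set_def)
  then have "finite {S. independent_set V E S}"
    using assms(1) by (auto simp: graph_def intro: finite_subset)
  then show ?thesis
    using assms(2) unfolding independence_number_def by simp
qed

lemma card_exchange:
  assumes "finite X" "S \<subseteq> X" "inj_on f S" "f ` S \<inter> X = {}"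
  shows "card (X - S \<union> f ` S) = card X"
proof -
  have "finite S"
    using assms(1,2) by (rule finite_subset[rotated])
  have "card (X - S \<union> f ` S) = card (X - S) + card (f ` S)"
    using assms(1,4) \<open>finite S\<close> by (intro card_Un_disjoint) auto
  also have "\<dots> = card X - card S + card S"
    using assms(1-3) by (simp add: card_Diff_subset[OF \<open>finite S\<close>] card_image)
  also have "\<dots> = card X"
    using assms(1,2) card_mono by fastforce
  finally show ?thesis .
qed

definition private_neighbour :: "'a set \<Rightarrow> ('a \<Rightarrow> 'a \<Rightarrow> bool) \<Rightarrow> 'a set \<Rightarrow> 'a \<Rightarrow> 'a \<Rightarrow> bool" where
  "private_neighbour V E X x p \<longleftrightarrow> p \<in> V - X \<and> E p x \<and> (\<forall>u\<in>X. E p u \<longrightarrow> u = x)"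

lemma private_neighbourD:
  assumes "graph V E" "private_neighbour V E X x p"
  shows "p \<in> V" "p \<notin> X" "E x p"
    and "\<And>u. u \<in> X \<Longrightarrow> u \<noteq> x \<Longrightarrow> \<not> E p u"
    and "\<And>u. u \<in> X \<Longrightarrow> u \<noteq> x \<Longrightarrow> \<not> E u p"
  using assms graph_sym[OF assms(1)] unfolding private_neighbour_def by blast+

lemma private_neighbour_owner_unique:
  "private_neighbour V E X x p \<Longrightarrow> private_neighbour V E X y p \<Longrightarrow> y \<in> X \<Longrightarrow> x = y"
  unfolding private_neighbour_def by blast

lemma private_neighbour_exists:
  assumes "graph V E" "minimal_dominating_set V E X" "x \<in> X" "w \<in> X" "E x w"
  shows "\<exists>p. private_neighbour V E X x p"
proof -
  have dom: "dominating_set V E X"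
    using assms(2) by (simp add: minimal_dominating_set_def)
  have "\<not> dominating_set V E (X - {x})"
    using assms(2,3) unfolding minimal_dominating_set_def by blast
  moreover have "X - {x} \<subseteq> V"
    using dom by (auto simp: dominating_set_def)
  ultimately obtain v where v: "v \<in> V - (X - {x})" and v_undominated: "\<forall>u\<in>X - {x}. \<not> E v u"
    unfolding dominating_set_def by blast
  have "w \<noteq> x"
    using assms(5) graph_irrefl[OF assms(1)] by auto
  then have "v \<notin> X"
    using v v_undominated assms(4,5) by auto
  then obtain u where "u \<in> X" "E v u"
    using dom v unfolding dominating_set_def by auto
  then have "private_neighbour V E X x v"
    using v v_undominated \<open>v \<notin> X\<close> unfolding private_neighbour_def by blast
  then show ?thesis ..
qed

definition chosen_private_neighbour :: "'a set \<Rightarrow> ('a \<Rightarrow> 'a \<Rightarrow> bool) \<Rightarrow> 'a set \<Rightarrow> 'a \<Rightarrow> 'a" where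
  "chosen_private_neighbour V E X x = (SOME p. private_neighbour V E X x p)"

lemma private_neighbour_chosen:
  assumes "graph V E" "minimal_dominating_set V E X" "x \<in> X" "w \<in> X" "E x w"
  shows "private_neighbour V E X x (chosen_private_neighbour V E X x)"
  unfolding chosen_private_neighbour_def
  using private_neighbour_exists[OF assms] by (rule someI_ex)

text \<open>Each such u lies in the non-neighbourhood of the edge xp.\<close>
lemma private_neighbour_non_neighbours_independent:
  assumes "graph V E" "twoK2_free V E" "X \<subseteq> V" "private_neighbour V E X x p"
  shows "independent_set V E {u \<in> X - {x}. \<not> E x u}"
proof (rule independent_set_subset)
  show "independent_set V E (edge_non_neighbourhood V E x p)"
    using assms(1,2) private_neighbourD(3)[OF assms(1,4)] by (rule edge_non_neighbourhood_independent)
  show "{u \<in> X - {x}. \<not> E x u} \<subseteq> edge_non_neighbourhood V E x p"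
    using assms(3) private_neighbourD[OF assms(1,4)] graph_sym[OF assms(1)]
    unfolding edge_non_neighbourhood_def by blast
qed

locale large_dominating_edge =
  fixes V :: "'a set" and E :: "'a \<Rightarrow> 'a \<Rightarrow> bool" and a b :: 'a and X :: "'a set"
  assumes graph: "graph V E"
    and twoK2_free: "twoK2_free V E"
    and edge: "E a b"
    and minimal: "minimal_dominating_set V E X"
    and a_in_X: "a \<in> X" and b_in_X: "b \<in> X"
    and large: "card X > independence_number V E"
begin

abbreviation Y :: "'a set" where
  "Y \<equiv> X \<inter> edge_neighbourhood V E a b"

abbreviation Z :: "'a set" where
  "Z \<equiv> X \<inter> edge_non_neighbourhood V E a b"

abbreviation pn :: "'a \<Rightarrow> 'a" where
  "pn \<equiv> chosen_private_neighbour V E X"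

lemma swap: "large_dominating_edge V E b a X"
  using graph twoK2_free graph_sym[OF graph edge] minimal a_in_X b_in_X large
  by unfold_locales

lemma X_subset_V: "X \<subseteq> V"
  using minimal by (simp add: minimal_dominating_set_def dominating_set_def)

lemma finite_X: "finite X"
  using graph X_subset_V by (auto simp: graph_def intro: finite_subset)

lemma independent_card_less: "independent_set V E I \<Longrightarrow> card I < card X"
  using card_le_independence_number[OF graph] large by (meson le_less_trans)

lemma a_neq_b: "a \<noteq> b"
  using edge graph_irrefl[OF graph] by blast

lemma Y_D: "y \<in> Y \<Longrightarrow> y \<in> X \<and> y \<noteq> a \<and> y \<noteq> b \<and> (E y a \<or> E y b)"
  by (simp add: edge_neighbourhood_def)

lemma private_neighbour_pn: "x \<in> insert a (insert b Y) \<Longrightarrow> private_neighbour V E X x (pn x)"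
  using private_neighbour_chosen[OF graph minimal] edge graph_sym[OF graph] a_in_X b_in_X
  unfolding edge_neighbourhood_def by blast

lemmas pn_a = private_neighbourD[OF graph private_neighbour_pn[of a, simplified]]
lemmas pn_b = private_neighbourD[OF graph private_neighbour_pn[of b, simplified]]
lemmas pn_Y = private_neighbourD[OF graph private_neighbour_pn[OF insertI2[OF insertI2]]]

lemma inj_on_pn: "inj_on pn (insert a (insert b Y))"
  by (rule inj_onI) (metis private_neighbour_pn private_neighbour_owner_unique IntE insertE a_in_X b_in_X)

lemma pn_distinct:
  "x \<in> insert a (insert b Y) \<Longrightarrow> x' \<in> insert a (insert b Y) \<Longrightarrow> x \<noteq> x' \<Longrightarrow> pn x \<noteq> pn x'"
  using inj_on_pn unfolding inj_on_def by blast

lemma pn_Y_non_neighbourhood: "y \<in> Y \<Longrightarrow> pn y \<in> edge_non_neighbourhood V E a b"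
  using pn_Y[of y] Y_D[of y] a_in_X b_in_X unfolding edge_non_neighbourhood_def by blast

lemma pn_Y_non_adjacent: "y \<in> Y \<Longrightarrow> y' \<in> Y \<Longrightarrow> \<not> E (pn y) (pn y')"
  using edge_non_neighbourhood_independent[OF graph twoK2_free edge] pn_Y_non_neighbourhood
  unfolding independent_set_def by blast

text \<open>Otherwise exchanging b and the vertices of Y for their private neighbours turns X into an
  independent set of the same size.\<close>
lemma pn_b_joined_to_pn_Y: "\<exists>y\<in>Y. E (pn b) (pn y)"
proof (rule ccontr)
  assume not_joined: "\<not> (\<exists>y\<in>Y. E (pn b) (pn y))"
  let ?S = "insert b Y"
  have "card (X - ?S \<union> pn ` ?S) = card X"
    using finite_X b_in_X pn_b(2) pn_Y(2)
    by (intro card_exchange inj_on_subset[OF inj_on_pn]) auto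
  moreover have "independent_set V E (X - ?S \<union> pn ` ?S)"
  proof -
    have "independent_set V E (edge_non_neighbourhood V E a b)"
      using graph twoK2_free edge by (rule edge_non_neighbourhood_independent)
    then have "independent_set V E (Z \<union> pn ` Y)"
      by (rule independent_set_subset) (use pn_Y_non_neighbourhood in blast)
    moreover have "\<forall>u\<in>Z \<union> pn ` Y. \<not> E a u"
    proof
      fix u assume "u \<in> Z \<union> pn ` Y"
      then show "\<not> E a u"
        using pn_Y(5)[of _ a] a_in_X Y_D graph_sym[of V E a u, OF graph]
        by (auto simp: edge_non_neighbourhood_def)
    qed
    ultimately have "independent_set V E (insert a (Z \<union> pn ` Y))"
      using independent_set_insert[OF graph] a_in_X X_subset_V by blast
    moreover have "\<forall>u\<in>insert a (Z \<union> pn ` Y). \<not> E (pn b) u"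
      using pn_b(4) a_in_X a_neq_b not_joined by (auto simp: edge_non_neighbourhood_def)
    ultimately have "independent_set V E (insert (pn b) (insert a (Z \<union> pn ` Y)))"
      using independent_set_insert[OF graph] pn_b(1) by blast
    moreover have "X - ?S \<union> pn ` ?S = insert (pn b) (insert a (Z \<union> pn ` Y))"
      using a_in_X a_neq_b X_subset_V edge
      by (auto simp: edge_neighbourhood_def edge_non_neighbourhood_def)
    ultimately show ?thesis by simp
  qed
  ultimately show False
    using independent_card_less by (metis less_irrefl)
qed

lemma pn_a_joined_to_pn_Y: "\<exists>y\<in>Y. E (pn a) (pn y)"
proof -
  interpret swapped: large_dominating_edge V E b a X by (rule swap)
  show ?thesis
    using swapped.pn_b_joined_to_pn_Y by (simp add: edge_neighbourhood_commute)
qed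

lemma Y_nonempty: "Y \<noteq> {}"
  using pn_b_joined_to_pn_Y by blast

lemma Y_non_adjacent_to_a:
  assumes "y \<in> Y" "E (pn b) (pn y)" "w \<in> Y" "w \<noteq> y"
  shows "\<not> E w a"
proof
  assume "E w a"
  have "a \<notin> {pn b, pn y}" "w \<notin> {pn b, pn y}"
    using assms(1,3) pn_b(2) pn_Y(2) a_in_X Y_D by auto
  then have "E a (pn b) \<or> E a (pn y) \<or> E w (pn b) \<or> E w (pn y)"
    using twoK2_free_edges_joined[OF graph twoK2_free graph_sym[OF graph \<open>E w a\<close>] assms(2)]
    by blast
  then show False
    using assms pn_b(5) pn_Y(5) a_in_X a_neq_b Y_D by blast
qed

lemma Y_clique:
  assumes "y \<in> Y" "z \<in> Y" "y \<noteq> z"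
  shows "E y z"
proof -
  have "y \<notin> {z, pn z}" "pn y \<notin> {z, pn z}"
    using assms pn_Y(2)[OF assms(1)] pn_Y(2)[OF assms(2)] Y_D[OF assms(1)] Y_D[OF assms(2)]
      pn_distinct[of y z] by auto
  then have "E y z \<or> E y (pn z) \<or> E (pn y) z \<or> E (pn y) (pn z)"
    using twoK2_free_edges_joined[OF graph twoK2_free pn_Y(3)[OF assms(1)] pn_Y(3)[OF assms(2)]]
    by blast
  then show ?thesis
    using assms pn_Y(4)[of y] pn_Y(5)[of z] pn_Y_non_adjacent Y_D by blast
qed

text \<open>Take y1, y2 in Y with pn b ~ pn y1 and pn a ~ pn y2. Two distinct vertices of Y force
  y1 \<noteq> y2, y1 ~ a, y2 ~ b, hence pn a ~ pn b and y1 ~ y2: an induced 2K2.\<close>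
lemma Y_at_most_one:
  assumes "y \<in> Y" "z \<in> Y"
  shows "y = z"
proof (rule ccontr)
  assume "y \<noteq> z"
  interpret swapped: large_dominating_edge V E b a X by (rule swap)
  obtain y1 where y1: "y1 \<in> Y" "E (pn b) (pn y1)"
    using pn_b_joined_to_pn_Y by blast
  obtain y2 where y2: "y2 \<in> Y" "E (pn a) (pn y2)"
    using pn_a_joined_to_pn_Y by blast
  have not_a: "\<not> E w a" if "w \<in> Y" "w \<noteq> y1" for w
    using Y_non_adjacent_to_a y1 that by blast
  have not_b: "\<not> E w b" if "w \<in> Y" "w \<noteq> y2" for w
    using swapped.Y_non_adjacent_to_a y2 that by (simp add: edge_neighbourhood_commute)
  have "y1 \<noteq> y2"
    using not_a not_b Y_D assms \<open>y \<noteq> z\<close> by metis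
  then have "E y2 b"
    using not_a Y_D y2(1) by blast
  have y1_X: "y1 \<in> X" "y1 \<noteq> a" "y1 \<noteq> b" and y2_X: "y2 \<in> X" "y2 \<noteq> a" "y2 \<noteq> b"
    using Y_D y1(1) y2(1) by auto
  have "\<not> E (pn a) (pn y1)"
  proof
    assume "E (pn a) (pn y1)"
    moreover have "b \<notin> {pn a, pn y1}" "y2 \<notin> {pn a, pn y1}"
      using pn_a(2) pn_Y(2)[OF y1(1)] b_in_X y2_X by auto
    ultimately have "E b (pn a) \<or> E b (pn y1) \<or> E y2 (pn a) \<or> E y2 (pn y1)"
      using twoK2_free_edges_joined[OF graph twoK2_free graph_sym[OF graph \<open>E y2 b\<close>]] by blast
    then show False
      using pn_a(5)[OF b_in_X] pn_Y(5)[OF y1(1) b_in_X] pn_a(5)[OF y2_X(1,2)]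
        pn_Y(5)[OF y1(1) y2_X(1)] \<open>y1 \<noteq> y2\<close> a_neq_b y1_X(3) by auto
  qed
  moreover have "a \<notin> {pn b, pn y1}" "pn a \<notin> {pn b, pn y1}"
    using pn_b(2) pn_Y(2)[OF y1(1)] a_in_X a_neq_b y1_X y1(1) pn_distinct[of a b]
      pn_distinct[of a y1] by auto
  ultimately have "E (pn a) (pn b)"
    using twoK2_free_edges_joined[OF graph twoK2_free pn_a(3) y1(2)]
      pn_b(5)[of a] pn_Y(5)[OF y1(1), of a] a_in_X a_neq_b y1_X by blast
  moreover have "E y1 y2"
    using Y_clique y1(1) y2(1) \<open>y1 \<noteq> y2\<close> by blast
  moreover have "pn a \<notin> {y1, y2}" "pn b \<notin> {y1, y2}"
    using pn_a(2) pn_b(2) y1_X y2_X by auto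
  ultimately have "E (pn a) y1 \<or> E (pn a) y2 \<or> E (pn b) y1 \<or> E (pn b) y2"
    using twoK2_free_edges_joined[OF graph twoK2_free] by blast
  then show False
    using pn_a(4) pn_b(4) y1_X y2_X by blast
qed

lemma Y_singleton_adjacent_a:
  assumes "Y = {y}"
  shows "E y a"
proof (rule ccontr)
  assume "\<not> E y a"
  have rest_non_adjacent: "\<forall>u\<in>X - {a, b}. \<not> E a u"
  proof
    fix u assume "u \<in> X - {a, b}"
    show "\<not> E a u"
    proof
      assume "E a u"
      then have "u \<in> Y"
        using \<open>u \<in> X - {a, b}\<close> X_subset_V graph_sym[OF graph \<open>E a u\<close>]
        by (auto simp: edge_neighbourhood_def)
      then show False
        using assms \<open>\<not> E y a\<close> graph_sym[OF graph \<open>E a u\<close>] by auto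
    qed
  qed
  have "independent_set V E {u \<in> X - {a}. \<not> E a u}"
    using private_neighbour_non_neighbours_independent[OF graph twoK2_free X_subset_V]
      private_neighbour_pn[of a] by blast
  then have "independent_set V E (X - {a, b})"
    by (rule independent_set_subset) (use rest_non_adjacent in blast)
  then have "independent_set V E (insert a (X - {a, b}))"
    using independent_set_insert[OF graph] rest_non_adjacent a_in_X X_subset_V by blast
  moreover have "\<forall>u\<in>insert a (X - {a, b}). \<not> E (pn b) u"
    using pn_b(4) a_in_X a_neq_b by blast
  ultimately have "independent_set V E (insert (pn b) (insert a (X - {a, b})))"
    using independent_set_insert[OF graph] pn_b(1) by blast
  moreover have "X - {b} \<union> pn ` {b} = insert (pn b) (insert a (X - {a, b}))"
    using a_in_X a_neq_b by auto
  moreover have "card (X - {b} \<union> pn ` {b}) = card X"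
    using finite_X b_in_X pn_b(2) by (intro card_exchange) auto
  ultimately show False
    using independent_card_less by (metis less_irrefl)
qed

lemma Y_singleton_adjacent_b: "Y = {y} \<Longrightarrow> E y b"
proof -
  interpret swapped: large_dominating_edge V E b a X by (rule swap)
  show "Y = {y} \<Longrightarrow> E y b"
    using swapped.Y_singleton_adjacent_a by (simp add: edge_neighbourhood_commute)
qed

end

theorem lemma5p2:
  fixes V :: "'a set" and E :: "'a \<Rightarrow> 'a \<Rightarrow> bool" and a b :: 'a and X :: "'a set"
  assumes "graph V E"
    and "twoK2_free V E"
    and "E a b"
    and "minimal_dominating_set V E X"
    and "a \<in> X" and "b \<in> X"
    and "card X > independence_number V E"
  shows "card (X \<inter> {v \<in> V - {a, b}. E v a \<or> E v b}) = 1 \<and>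
         (\<forall>y \<in> X \<inter> {v \<in> V - {a, b}. E v a \<or> E v b}. E y a \<and> E y b)"
proof -
  interpret large_dominating_edge V E a b X
    using assms by unfold_locales
  obtain y where Y: "X \<inter> edge_neighbourhood V E a b = {y}"
    using Y_nonempty Y_at_most_one by blast
  moreover have "E y a" "E y b"
    using Y_singleton_adjacent_a[OF Y] Y_singleton_adjacent_b[OF Y] by auto
  ultimately show ?thesis
    unfolding edge_neighbourhood_def by simp
qed

end
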